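(* Let $\alpha>0$, $\beta>0$, and let $(X_t;t\geq0)$ be a non-trivial stochastically continuous $\alpha$-IDT process. Then $(X_t;t\geq0)$ is strictly $\beta$-stable if and only if it is $(\alpha/\beta)$-selfsimilar.
   Context: For $\alpha>0$, a stochastic process $X=(X_t;t\geq0)$ (real or $\mathbb{R}^d$-valued) is called an $\alpha$-IDT process if for every integer $n\geq1$, $(X_{n^{1/\alpha}t};t\geq0)\stackrel{(law)}{=}(X^{(1)}_t+\cdots+X^{(n)}_t;t\geq0)$, where $X^{(1)},\dots,X^{(n)}$ are independent copies of $X$; equality in law means equality of all finite-dimensional distributions. A process $X$ is strictly $\beta$-stable if for every integer $n\ge1$, $(X^{(1)}_t+\cdots+X^{(n)}_t;t\ge0)\stackrel{(law)}{=}(n^{1/\beta}X_t;t\ge0)$ with $X^{(j)}$ independent copies of $X$. A process $X$ is $H$-selfsimilar if for every $a>0$, $(X_{at};t\geq0)\stackrel{(law)}{=}(a^HX_t;t\ge0)$. Non-trivial means not almost surely identically zero. *)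

theory Defs
  imports "HOL-Probability.Probability"
begin

text \<open>A process is a family X t :: 'a => 'b of random variables on a probability
space M, indexed by real times t >= 0 (values at t < 0 are irrelevant).\<close>

definition fdd :: "'a measure \<Rightarrow> (real \<Rightarrow> 'a \<Rightarrow> 'b::topological_space) \<Rightarrow> real set
    \<Rightarrow> (real \<Rightarrow> 'b) measure" where
  "fdd M X T = distr M (PiM T (\<lambda>_. borel)) (\<lambda>\<omega>. \<lambda>t\<in>T. X t \<omega>)"

definition same_law :: "'a measure \<Rightarrow> (real \<Rightarrow> 'a \<Rightarrow> 'b::topological_space)
    \<Rightarrow> 'c measure \<Rightarrow> (real \<Rightarrow> 'c \<Rightarrow> 'b) \<Rightarrow> bool" where
  "same_law M X N Y \<longleftrightarrow> (\<forall>T. finite T \<and> T \<subseteq> {0..} \<longrightarrow> fdd M X T = fdd N Y T)"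

text \<open>n independent copies of X live on the product space of n copies of M;
  their sum X^(1)+...+X^(n) is the following process on that space.\<close>
definition copies_space :: "'a measure \<Rightarrow> nat \<Rightarrow> (nat \<Rightarrow> 'a) measure" where
  "copies_space M n = PiM {..<n} (\<lambda>_. M)"

definition copies_sum :: "(real \<Rightarrow> 'a \<Rightarrow> 'b::real_vector) \<Rightarrow> nat \<Rightarrow> real \<Rightarrow> (nat \<Rightarrow> 'a) \<Rightarrow> 'b" where
  "copies_sum X n t \<omega> = (\<Sum>j<n. X t (\<omega> j))"

definition is_process :: "'a measure \<Rightarrow> (real \<Rightarrow> 'a \<Rightarrow> 'b::topological_space) \<Rightarrow> bool" where
  "is_process M X \<longleftrightarrow> prob_space M \<and> (\<forall>t\<ge>0. X t \<in> borel_measurable M)"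

definition IDT :: "real \<Rightarrow> 'a measure \<Rightarrow> (real \<Rightarrow> 'a \<Rightarrow> 'b::{real_vector,topological_space}) \<Rightarrow> bool" where
  "IDT \<alpha> M X \<longleftrightarrow> (\<forall>n::nat. n \<ge> 1 \<longrightarrow>
     same_law M (\<lambda>t \<omega>. X (real n powr (1/\<alpha>) * t) \<omega>) (copies_space M n) (copies_sum X n))"

definition strictly_stable :: "real \<Rightarrow> 'a measure \<Rightarrow> (real \<Rightarrow> 'a \<Rightarrow> 'b::{real_vector,topological_space}) \<Rightarrow> bool" where
  "strictly_stable \<beta> M X \<longleftrightarrow> (\<forall>n::nat. n \<ge> 1 \<longrightarrow>
     same_law (copies_space M n) (copies_sum X n) M (\<lambda>t \<omega>. real n powr (1/\<beta>) *\<^sub>R X t \<omega>))"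

definition selfsimilar :: "real \<Rightarrow> 'a measure \<Rightarrow> (real \<Rightarrow> 'a \<Rightarrow> 'b::{real_vector,topological_space}) \<Rightarrow> bool" where
  "selfsimilar H M X \<longleftrightarrow> (\<forall>a::real. a > 0 \<longrightarrow>
     same_law M (\<lambda>t \<omega>. X (a * t) \<omega>) M (\<lambda>t \<omega>. a powr H *\<^sub>R X t \<omega>))"

definition stoch_continuous :: "'a measure \<Rightarrow> (real \<Rightarrow> 'a \<Rightarrow> 'b::metric_space) \<Rightarrow> bool" where
  "stoch_continuous M X \<longleftrightarrow> (\<forall>t\<ge>0. \<forall>e>0.
     ((\<lambda>s. measure M {\<omega>\<in>space M. dist (X s \<omega>) (X t \<omega>) > e}) \<longlongrightarrow> 0) (at t within {0..}))"

definition nontrivial :: "'a measure \<Rightarrow> (real \<Rightarrow> 'a \<Rightarrow> 'b::zero) \<Rightarrow> bool" where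
  "nontrivial M X \<longleftrightarrow> \<not> (AE \<omega> in M. \<forall>t\<ge>0. X t \<omega> = 0)"

end

theory Submission
  imports Defs
begin

text \<open>Combining the IDT property with strict stability gives \<open>X(n^(1/\<alpha>) t) = n^(1/\<beta>) X(t)\<close>
  in law for every integer \<open>n \<ge> 1\<close>, and rescaling time turns this into the same identity for
  every positive rational \<open>q = n/m\<close> in place of \<open>n\<close>. For arbitrary \<open>a > 0\<close> let \<open>q\<close> tend to
  \<open>a^\<alpha>\<close>: by stochastic continuity both sides converge in probability, and equality of
  finite-dimensional laws survives such limits (test against closed boxes and their closed
  thickenings). Conversely, self-similarity at
  \<open>a = n^(1/\<alpha>)\<close> composed with the IDT property is strict \<open>\<beta>\<close>-stability.\<close>

lemma same_law_sym: "same_law M X N Y \<Longrightarrow> same_law N Y M X"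
  unfolding same_law_def by auto

lemma same_law_trans: "same_law M X N Y \<Longrightarrow> same_law N Y L Z \<Longrightarrow> same_law M X L Z"
  unfolding same_law_def by auto

lemma measurable_restrict_process:
  assumes "\<And>t. t \<in> T \<Longrightarrow> X t \<in> borel_measurable M"
  shows "(\<lambda>\<omega>. \<lambda>t\<in>T. X t \<omega>) \<in> M \<rightarrow>\<^sub>M PiM T (\<lambda>_. borel)"
  using assms by (intro measurable_restrict) auto

lemma emeasure_fdd_PiE:
  assumes "finite T" and "\<And>t. t \<in> T \<Longrightarrow> X t \<in> borel_measurable M"
    and "\<And>t. t \<in> T \<Longrightarrow> D t \<in> sets borel"
  shows "emeasure (fdd M X T) (Pi\<^sub>E T D) = emeasure M {\<omega>\<in>space M. \<forall>t\<in>T. X t \<omega> \<in> D t}"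
proof -
  have "Pi\<^sub>E T D \<in> sets (PiM T (\<lambda>_. borel))"
    using assms by (intro sets_PiM_I_finite) auto
  then show ?thesis
    unfolding fdd_def using measurable_restrict_process[of T X M] assms(2)
    by (subst emeasure_distr)
       (auto simp: restrict_PiE_iff intro!: arg_cong[where f="emeasure M"])
qed

lemma measure_fdd_PiE:
  assumes "finite T" and "\<And>t. t \<in> T \<Longrightarrow> X t \<in> borel_measurable M"
    and "\<And>t. t \<in> T \<Longrightarrow> D t \<in> sets borel"
  shows "measure (fdd M X T) (Pi\<^sub>E T D) = measure M {\<omega>\<in>space M. \<forall>t\<in>T. X t \<omega> \<in> D t}"
  using emeasure_fdd_PiE[OF assms] by (simp add: measure_def)

lemma fdd_comp:
  assumes "\<And>s. s \<in> \<phi> ` T \<Longrightarrow> X s \<in> borel_measurable M"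
    and f: "f \<in> borel_measurable borel"
  shows "fdd M (\<lambda>t \<omega>. f (X (\<phi> t) \<omega>)) T
     = distr (fdd M X (\<phi> ` T)) (PiM T (\<lambda>_. borel)) (\<lambda>h. \<lambda>t\<in>T. f (h (\<phi> t)))"
proof -
  have "(\<lambda>h. \<lambda>t\<in>T. f (h (\<phi> t))) \<in> PiM (\<phi> ` T) (\<lambda>_. borel) \<rightarrow>\<^sub>M PiM T (\<lambda>_. borel)"
  proof (intro measurable_restrict)
    fix t assume "t \<in> T"
    then have "(\<lambda>h. h (\<phi> t)) \<in> PiM (\<phi> ` T) (\<lambda>_. borel) \<rightarrow>\<^sub>M borel"
      by (intro measurable_component_singleton) auto
    then show "(\<lambda>h. f (h (\<phi> t))) \<in> PiM (\<phi> ` T) (\<lambda>_. borel) \<rightarrow>\<^sub>M borel"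
      using f by (rule measurable_compose)
  qed
  then show ?thesis
    unfolding fdd_def using measurable_restrict_process[of "\<phi> ` T" X M] assms(1)
    by (subst distr_distr) (auto intro!: distr_cong simp: comp_def)
qed

lemma same_law_comp:
  assumes law: "same_law M X N Y"
    and "\<And>t. t \<ge> 0 \<Longrightarrow> X t \<in> borel_measurable M"
    and "\<And>t. t \<ge> 0 \<Longrightarrow> Y t \<in> borel_measurable N"
    and \<phi>: "\<And>t. t \<ge> 0 \<Longrightarrow> \<phi> t \<ge> 0"
    and "f \<in> borel_measurable borel"
  shows "same_law M (\<lambda>t \<omega>. f (X (\<phi> t) \<omega>)) N (\<lambda>t \<omega>. f (Y (\<phi> t) \<omega>))"
  unfolding same_law_def
proof (intro allI impI)
  fix T :: "real set" assume T: "finite T \<and> T \<subseteq> {0..}"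
  then have "\<phi> ` T \<subseteq> {0..}" using \<phi> by auto
  moreover have "fdd M X (\<phi> ` T) = fdd N Y (\<phi> ` T)"
    using law T calculation unfolding same_law_def by auto
  ultimately show "fdd M (\<lambda>t \<omega>. f (X (\<phi> t) \<omega>)) T = fdd N (\<lambda>t \<omega>. f (Y (\<phi> t) \<omega>)) T"
    using assms by (subst (1 2) fdd_comp) auto
qed

lemma same_law_rescale_time:
  assumes "same_law M X N Y"
    and "\<And>t. t \<ge> 0 \<Longrightarrow> X t \<in> borel_measurable M"
    and "\<And>t. t \<ge> 0 \<Longrightarrow> Y t \<in> borel_measurable N"
    and "a \<ge> 0"
  shows "same_law M (\<lambda>t. X (a * t)) N (\<lambda>t. Y (a * t))"
  using same_law_comp[OF assms(1-3), of "\<lambda>t. a * t" "\<lambda>x. x"] assms(4) by auto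

lemma same_law_scaleR:
  fixes X :: "real \<Rightarrow> 'a \<Rightarrow> 'b::{real_normed_vector, second_countable_topology}"
  assumes "same_law M X N Y"
    and "\<And>t. t \<ge> 0 \<Longrightarrow> X t \<in> borel_measurable M"
    and "\<And>t. t \<ge> 0 \<Longrightarrow> Y t \<in> borel_measurable N"
  shows "same_law M (\<lambda>t \<omega>. c *\<^sub>R X t \<omega>) N (\<lambda>t \<omega>. c *\<^sub>R Y t \<omega>)"
  using same_law_comp[OF assms, of "\<lambda>t. t" "\<lambda>x. c *\<^sub>R x"] by auto

definition converges_in_prob :: "'a measure \<Rightarrow> (nat \<Rightarrow> 'a \<Rightarrow> 'b::metric_space) \<Rightarrow> ('a \<Rightarrow> 'b) \<Rightarrow> bool"
  where "converges_in_prob M Y Y0 \<longleftrightarrow>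
    (\<forall>e>0. (\<lambda>k. measure M {\<omega>\<in>space M. dist (Y k \<omega>) (Y0 \<omega>) > e}) \<longlonglongrightarrow> 0)"

lemma measure_event_le_close_event:
  fixes U V :: "real \<Rightarrow> 'a \<Rightarrow> 'b::{metric_space, second_countable_topology}"
  assumes "finite_measure M" and T: "finite T"
    and mU: "\<And>t. t \<in> T \<Longrightarrow> U t \<in> borel_measurable M"
    and mV: "\<And>t. t \<in> T \<Longrightarrow> V t \<in> borel_measurable M"
    and D: "\<And>t. t \<in> T \<Longrightarrow> closed (D t)"
    and CD: "\<And>t x y. t \<in> T \<Longrightarrow> x \<in> C t \<Longrightarrow> dist y x \<le> e \<Longrightarrow> y \<in> D t"
  shows "measure M {\<omega>\<in>space M. \<forall>t\<in>T. U t \<omega> \<in> C t}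
     \<le> measure M {\<omega>\<in>space M. \<forall>t\<in>T. V t \<omega> \<in> D t}
       + (\<Sum>t\<in>T. measure M {\<omega>\<in>space M. dist (V t \<omega>) (U t \<omega>) > e})"
proof -
  interpret finite_measure M by fact
  define far where "far t = {\<omega>\<in>space M. dist (V t \<omega>) (U t \<omega>) > e}" for t
  have far: "far t \<in> sets M" if "t \<in> T" for t
    unfolding far_def using mU[OF that] mV[OF that] by measurable
  have D_event: "{\<omega>\<in>space M. \<forall>t\<in>T. V t \<omega> \<in> D t} \<in> sets M"
    using T pred_sets2[OF borel_closed[OF D] mV] by (intro sets.sets_Collect_finite_All) (auto simp: pred_def)
  have "measure M {\<omega>\<in>space M. \<forall>t\<in>T. U t \<omega> \<in> C t}
      \<le> measure M ({\<omega>\<in>space M. \<forall>t\<in>T. V t \<omega> \<in> D t} \<union> (\<Union>t\<in>T. far t))"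
    using CD D_event far T unfolding far_def
    by (intro finite_measure_mono sets.Un sets.finite_UN) (auto simp: not_less)
  also have "\<dots> \<le> measure M {\<omega>\<in>space M. \<forall>t\<in>T. V t \<omega> \<in> D t} + measure M (\<Union>t\<in>T. far t)"
    using D_event far T by (intro measure_Un_le sets.finite_UN) auto
  also have "measure M (\<Union>t\<in>T. far t) \<le> (\<Sum>t\<in>T. measure M (far t))"
    using far T by (intro measure_subadditive_finite) auto
  finally show ?thesis unfolding far_def by simp
qed

lemma closed_infdist_le: "closed {x. infdist x S \<le> r}"
  by (intro closed_Collect_le continuous_intros)

lemma tendsto_measure_infdist_le:
  fixes Z :: "real \<Rightarrow> 'a \<Rightarrow> 'b::{metric_space, second_countable_topology}"
  assumes "finite_measure N" and T: "finite T"
    and mZ: "\<And>t. t \<in> T \<Longrightarrow> Z t \<in> borel_measurable N"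
    and C: "\<And>t. t \<in> T \<Longrightarrow> closed (C t)" and C_ne: "\<And>t. t \<in> T \<Longrightarrow> C t \<noteq> {}"
  shows "(\<lambda>j. measure N {\<omega>\<in>space N. \<forall>t\<in>T. infdist (Z t \<omega>) (C t) \<le> 1 / real (Suc j)})
    \<longlonglongrightarrow> measure N {\<omega>\<in>space N. \<forall>t\<in>T. Z t \<omega> \<in> C t}"
proof -
  interpret finite_measure N by fact
  define A where "A j = {\<omega>\<in>space N. \<forall>t\<in>T. infdist (Z t \<omega>) (C t) \<le> 1 / real (Suc j)}" for j
  have "A j \<in> sets N" for j
    unfolding A_def using T pred_sets2[OF borel_closed[OF closed_infdist_le] mZ]
    by (intro sets.sets_Collect_finite_All) (auto simp: pred_def)
  moreover have "decseq A"
    unfolding A_def by (intro decseq_SucI) (auto intro: order_trans[OF _ frac_le])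
  moreover have "(\<Inter>j. A j) = {\<omega>\<in>space N. \<forall>t\<in>T. Z t \<omega> \<in> C t}"
  proof (intro set_eqI iffI)
    fix \<omega> assume "\<omega> \<in> (\<Inter>j. A j)"
    then have \<omega>: "\<omega> \<in> space N"
      and small: "\<And>j t. t \<in> T \<Longrightarrow> infdist (Z t \<omega>) (C t) \<le> 1 / real (Suc j)"
      unfolding A_def by auto
    have "infdist (Z t \<omega>) (C t) = 0" if "t \<in> T" for t
    proof (rule ccontr)
      assume "infdist (Z t \<omega>) (C t) \<noteq> 0"
      then have "infdist (Z t \<omega>) (C t) > 0" using infdist_nonneg[of "Z t \<omega>" "C t"] by linarith
      then obtain j where "inverse (real (Suc j)) < infdist (Z t \<omega>) (C t)"
        using reals_Archimedean by blast
      with small[OF that, of j] show False by (simp add: divide_inverse)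
    qed
    then show "\<omega> \<in> {\<omega>\<in>space N. \<forall>t\<in>T. Z t \<omega> \<in> C t}"
      using \<omega> in_closed_iff_infdist_zero[OF C C_ne] by auto
  qed (auto simp: A_def)
  ultimately show ?thesis
    using finite_Lim_measure_decseq[of A] unfolding A_def by auto
qed

lemma measure_event_le_thickened_event:
  fixes U V :: "real \<Rightarrow> 'a \<Rightarrow> 'b::{metric_space, second_countable_topology}"
    and W Z :: "real \<Rightarrow> 'c \<Rightarrow> 'b"
  assumes "finite_measure M" and "finite_measure N" and T: "finite T"
    and mU: "\<And>t. t \<in> T \<Longrightarrow> U t \<in> borel_measurable M"
    and mV: "\<And>t. t \<in> T \<Longrightarrow> V t \<in> borel_measurable M"
    and mW: "\<And>t. t \<in> T \<Longrightarrow> W t \<in> borel_measurable N"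
    and mZ: "\<And>t. t \<in> T \<Longrightarrow> Z t \<in> borel_measurable N"
    and law: "fdd M V T = fdd N W T"
  shows "measure M {\<omega>\<in>space M. \<forall>t\<in>T. U t \<omega> \<in> C t}
    \<le> measure N {\<omega>\<in>space N. \<forall>t\<in>T. infdist (Z t \<omega>) (C t) \<le> 2 * e}
      + (\<Sum>t\<in>T. measure M {\<omega>\<in>space M. dist (V t \<omega>) (U t \<omega>) > e})
      + (\<Sum>t\<in>T. measure N {\<omega>\<in>space N. dist (Z t \<omega>) (W t \<omega>) > e})"
proof -
  define thick where "thick r t = {x. infdist x (C t) \<le> r}" for r t
  have closed_thick: "closed (thick r t)" for r t
    unfolding thick_def by (rule closed_infdist_le)
  have "measure M {\<omega>\<in>space M. \<forall>t\<in>T. U t \<omega> \<in> C t}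
      \<le> measure M {\<omega>\<in>space M. \<forall>t\<in>T. V t \<omega> \<in> thick e t}
        + (\<Sum>t\<in>T. measure M {\<omega>\<in>space M. dist (V t \<omega>) (U t \<omega>) > e})"
    using assms(1) T mU mV closed_thick
  proof (rule measure_event_le_close_event)
    fix t x y assume "x \<in> C t" "dist y x \<le> e"
    then show "y \<in> thick e t"
      unfolding thick_def using infdist_triangle[of y "C t" x] by simp
  qed
  also have "measure M {\<omega>\<in>space M. \<forall>t\<in>T. V t \<omega> \<in> thick e t}
      = measure N {\<omega>\<in>space N. \<forall>t\<in>T. W t \<omega> \<in> thick e t}"
    using measure_fdd_PiE[of T V M "thick e"] measure_fdd_PiE[of T W N "thick e"]
      T mV mW law closed_thick by (simp add: borel_closed)
  also have "\<dots> \<le> measure N {\<omega>\<in>space N. \<forall>t\<in>T. Z t \<omega> \<in> thick (2 * e) t}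
      + (\<Sum>t\<in>T. measure N {\<omega>\<in>space N. dist (Z t \<omega>) (W t \<omega>) > e})"
    using assms(2) T mW mZ closed_thick
  proof (rule measure_event_le_close_event)
    fix t x y assume "x \<in> thick e t" "dist y x \<le> e"
    then show "y \<in> thick (2 * e) t"
      unfolding thick_def using infdist_triangle[of y "C t" x] by simp
  qed
  finally show ?thesis unfolding thick_def by simp
qed

lemma measure_closed_event_le_of_converges_in_prob:
  fixes V :: "nat \<Rightarrow> real \<Rightarrow> 'a \<Rightarrow> 'b::{metric_space, second_countable_topology}"
    and W :: "nat \<Rightarrow> real \<Rightarrow> 'c \<Rightarrow> 'b"
  assumes "finite_measure M" and "finite_measure N" and T: "finite T"
    and "\<And>t. t \<in> T \<Longrightarrow> U t \<in> borel_measurable M"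
    and "\<And>k t. t \<in> T \<Longrightarrow> V k t \<in> borel_measurable M"
    and "\<And>k t. t \<in> T \<Longrightarrow> W k t \<in> borel_measurable N"
    and "\<And>t. t \<in> T \<Longrightarrow> Z t \<in> borel_measurable N"
    and V: "\<And>t. t \<in> T \<Longrightarrow> converges_in_prob M (\<lambda>k. V k t) (U t)"
    and W: "\<And>t. t \<in> T \<Longrightarrow> converges_in_prob N (\<lambda>k. W k t) (Z t)"
    and "\<And>k. fdd M (V k) T = fdd N (W k) T"
    and "\<And>t. t \<in> T \<Longrightarrow> closed (C t)" and "\<And>t. t \<in> T \<Longrightarrow> C t \<noteq> {}"
  shows "measure M {\<omega>\<in>space M. \<forall>t\<in>T. U t \<omega> \<in> C t} \<le> measure N {\<omega>\<in>space N. \<forall>t\<in>T. Z t \<omega> \<in> C t}"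
  \<comment> \<open>Let \<open>k \<rightarrow> \<infinity>\<close> in the bound of \<open>measure_event_le_thickened_event\<close>, then shrink the thickening.\<close>
proof -
  define thickened where
    "thickened e = measure N {\<omega>\<in>space N. \<forall>t\<in>T. infdist (Z t \<omega>) (C t) \<le> e}" for e
  have less: "measure M {\<omega>\<in>space M. \<forall>t\<in>T. U t \<omega> \<in> C t} \<le> thickened (2 * e)" if "e > 0" for e
  proof (rule LIMSEQ_le_const)
    have "(\<lambda>k. thickened (2 * e)
        + (\<Sum>t\<in>T. measure M {\<omega>\<in>space M. dist (V k t \<omega>) (U t \<omega>) > e})
        + (\<Sum>t\<in>T. measure N {\<omega>\<in>space N. dist (Z t \<omega>) (W k t \<omega>) > e}))
      \<longlonglongrightarrow> thickened (2 * e) + (\<Sum>t\<in>T. 0) + (\<Sum>t\<in>T. 0)"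
      using V W \<open>e > 0\<close> unfolding converges_in_prob_def
      by (intro tendsto_intros) (auto simp: dist_commute)
    then show "(\<lambda>k. thickened (2 * e)
        + (\<Sum>t\<in>T. measure M {\<omega>\<in>space M. dist (V k t \<omega>) (U t \<omega>) > e})
        + (\<Sum>t\<in>T. measure N {\<omega>\<in>space N. dist (Z t \<omega>) (W k t \<omega>) > e}))
      \<longlonglongrightarrow> thickened (2 * e)"
      by simp
    show "\<exists>K. \<forall>k\<ge>K. measure M {\<omega>\<in>space M. \<forall>t\<in>T. U t \<omega> \<in> C t} \<le> thickened (2 * e)
        + (\<Sum>t\<in>T. measure M {\<omega>\<in>space M. dist (V k t \<omega>) (U t \<omega>) > e})
        + (\<Sum>t\<in>T. measure N {\<omega>\<in>space N. dist (Z t \<omega>) (W k t \<omega>) > e})"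
      unfolding thickened_def using assms(1-7,10)
      by (intro exI[of _ 0] allI impI measure_event_le_thickened_event) auto
  qed
  have "measure M {\<omega>\<in>space M. \<forall>t\<in>T. U t \<omega> \<in> C t} \<le> thickened (1 / real (Suc j))" for j
  proof -
    have "measure M {\<omega>\<in>space M. \<forall>t\<in>T. U t \<omega> \<in> C t} \<le> thickened (2 * (1 / (2 * real (Suc j))))"
      by (rule less) simp
    also have "2 * (1 / (2 * real (Suc j))) = 1 / real (Suc j)"
      by (simp add: field_simps)
    finally show ?thesis .
  qed
  then show ?thesis
    using tendsto_measure_infdist_le[of N T Z C] assms unfolding thickened_def
    by (intro LIMSEQ_le_const) auto
qed

lemma fdd_eqI_closed_events:
  fixes U :: "real \<Rightarrow> 'a \<Rightarrow> 'b::{metric_space, second_countable_topology}"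
  assumes M: "prob_space M" and N: "prob_space N" and T: "finite T"
    and mU: "\<And>t. t \<in> T \<Longrightarrow> U t \<in> borel_measurable M"
    and mZ: "\<And>t. t \<in> T \<Longrightarrow> Z t \<in> borel_measurable N"
    and eq: "\<And>C. (\<And>t. t \<in> T \<Longrightarrow> closed (C t)) \<Longrightarrow> (\<And>t. t \<in> T \<Longrightarrow> C t \<noteq> {}) \<Longrightarrow>
      measure M {\<omega>\<in>space M. \<forall>t\<in>T. U t \<omega> \<in> C t} = measure N {\<omega>\<in>space N. \<forall>t\<in>T. Z t \<omega> \<in> C t}"
  shows "fdd M U T = fdd N Z T"
proof -
  interpret M: prob_space M by fact
  interpret N: prob_space N by fact
  define \<Omega> where "\<Omega> = Pi\<^sub>E T (\<lambda>_. UNIV :: 'b set)"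
  define G where "G = {{f\<in>\<Omega>. \<forall>i\<in>j. f i \<in> C i} | C j. j \<in> {T} \<and> C \<in> Pi j (\<lambda>_. Collect closed)}"
  have G: "G \<subseteq> Pow \<Omega>" unfolding G_def by auto
  have sets_fdd: "sets (fdd L Y T) = sigma_sets \<Omega> G" for L and Y :: "real \<Rightarrow> _ \<Rightarrow> 'b"
  proof -
    have "sets (PiM T (\<lambda>_. sigma (UNIV :: 'b set) (Collect closed))) = sets (sigma \<Omega> G)"
      unfolding G_def \<Omega>_def by (rule sets_PiM_sigma) (auto intro!: exI[of _ "{UNIV}"] simp: T)
    then show ?thesis
      using G unfolding fdd_def borel_eq_closed[symmetric] by simp
  qed
  have prob_fdd: "prob_space (fdd M U T)"
    unfolding fdd_def using M.prob_space_distr[OF measurable_restrict_process] mU .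
  show ?thesis
  proof (rule measure_eqI_generator_eq[where \<Omega>=\<Omega> and E=G and A="\<lambda>_. \<Omega>"])
    show "Int_stable G"
    proof (rule Int_stableI)
      fix a b assume "a \<in> G" "b \<in> G"
      then obtain A B where a: "a = {f\<in>\<Omega>. \<forall>i\<in>T. f i \<in> A i}" "A \<in> Pi T (\<lambda>_. Collect closed)"
        and b: "b = {f\<in>\<Omega>. \<forall>i\<in>T. f i \<in> B i}" "B \<in> Pi T (\<lambda>_. Collect closed)"
        unfolding G_def by auto
      then show "a \<inter> b \<in> G" unfolding G_def
        by (intro CollectI exI[where x="\<lambda>i. A i \<inter> B i"] exI[where x=T]) (auto intro: closed_Int)
    qed
    show "range (\<lambda>_. \<Omega>) \<subseteq> G" unfolding G_def
      by (auto intro!: exI[of _ "\<lambda>_. UNIV"] exI[of _ T])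
    show "emeasure (fdd M U T) \<Omega> \<noteq> \<infinity>" for i :: nat
      using prob_space.emeasure_le_1[OF prob_fdd, of \<Omega>] by (auto simp: top_unique)
    fix E assume "E \<in> G"
    then obtain C where E: "E = Pi\<^sub>E T C" and C: "\<And>t. t \<in> T \<Longrightarrow> closed (C t)"
      unfolding G_def \<Omega>_def by (auto simp: PiE_def Pi_def)
    show "emeasure (fdd M U T) E = emeasure (fdd N Z T) E"
    proof (cases "\<exists>t\<in>T. C t = {}")
      case True
      then show ?thesis unfolding E by auto
    next
      case False
      have "emeasure (fdd M U T) E = measure M {\<omega>\<in>space M. \<forall>t\<in>T. U t \<omega> \<in> C t}"
        unfolding E using T mU C by (simp add: emeasure_fdd_PiE borel_closed M.emeasure_eq_measure)
      also have "\<dots> = measure N {\<omega>\<in>space N. \<forall>t\<in>T. Z t \<omega> \<in> C t}"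
        using False by (intro arg_cong[where f=ennreal] eq C) auto
      also have "\<dots> = emeasure (fdd N Z T) E"
        unfolding E using T mZ C by (simp add: emeasure_fdd_PiE borel_closed N.emeasure_eq_measure)
      finally show ?thesis .
    qed
  qed (simp_all add: G sets_fdd)
qed

lemma fdd_eq_of_converges_in_prob:
  fixes V :: "nat \<Rightarrow> real \<Rightarrow> 'a \<Rightarrow> 'b::{metric_space, second_countable_topology}"
    and W :: "nat \<Rightarrow> real \<Rightarrow> 'c \<Rightarrow> 'b"
  assumes "prob_space M" and "prob_space N" and "finite T"
    and "\<And>t. t \<in> T \<Longrightarrow> U t \<in> borel_measurable M"
    and "\<And>k t. t \<in> T \<Longrightarrow> V k t \<in> borel_measurable M"
    and "\<And>k t. t \<in> T \<Longrightarrow> W k t \<in> borel_measurable N"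
    and "\<And>t. t \<in> T \<Longrightarrow> Z t \<in> borel_measurable N"
    and "\<And>t. t \<in> T \<Longrightarrow> converges_in_prob M (\<lambda>k. V k t) (U t)"
    and "\<And>t. t \<in> T \<Longrightarrow> converges_in_prob N (\<lambda>k. W k t) (Z t)"
    and "\<And>k. fdd M (V k) T = fdd N (W k) T"
  shows "fdd M U T = fdd N Z T"
proof (rule fdd_eqI_closed_events[OF assms(1-4,7)])
  have M: "finite_measure M" and N: "finite_measure N"
    using assms(1,2) by (simp_all add: prob_space.finite_measure)
  fix C :: "real \<Rightarrow> 'b set"
  assume "\<And>t. t \<in> T \<Longrightarrow> closed (C t)" "\<And>t. t \<in> T \<Longrightarrow> C t \<noteq> {}"
  then show "measure M {\<omega>\<in>space M. \<forall>t\<in>T. U t \<omega> \<in> C t} = measure N {\<omega>\<in>space N. \<forall>t\<in>T. Z t \<omega> \<in> C t}"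
    using measure_closed_event_le_of_converges_in_prob[OF M N assms(3-10)]
      measure_closed_event_le_of_converges_in_prob[OF N M assms(3,7,6,5,4,9,8) assms(10)[symmetric]]
    by (auto intro: antisym)
qed

lemma tendsto_measure_norm_gt:
  fixes Y :: "'a \<Rightarrow> 'b::{real_normed_vector, second_countable_topology}"
  assumes "prob_space M" and "Y \<in> borel_measurable M"
  shows "(\<lambda>j. measure M {\<omega>\<in>space M. norm (Y \<omega>) > real j}) \<longlonglongrightarrow> 0"
proof -
  interpret prob_space M by fact
  define B where "B j = {\<omega>\<in>space M. norm (Y \<omega>) > real j}" for j
  have "B j \<in> sets M" for j
    unfolding B_def using assms(2) by measurable
  moreover have "decseq B"
    unfolding B_def decseq_def by auto
  moreover have "(\<Inter>j. B j) = {}"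
  proof safe
    fix \<omega> assume "\<omega> \<in> (\<Inter>j. B j)"
    then have "norm (Y \<omega>) > real (nat \<lceil>norm (Y \<omega>)\<rceil>)" unfolding B_def by blast
    then show "\<omega> \<in> {}" by linarith
  qed
  ultimately show ?thesis
    using finite_Lim_measure_decseq[of B] unfolding B_def by auto
qed

lemma converges_in_prob_scaleR:
  fixes Y :: "'a \<Rightarrow> 'b::{real_normed_vector, second_countable_topology}"
  assumes "prob_space M" and Y: "Y \<in> borel_measurable M" and c: "c \<longlonglongrightarrow> c0"
  shows "converges_in_prob M (\<lambda>k \<omega>. c k *\<^sub>R Y \<omega>) (\<lambda>\<omega>. c0 *\<^sub>R Y \<omega>)"
  unfolding converges_in_prob_def
proof (intro allI impI LIMSEQ_I)
  interpret prob_space M by fact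
  fix e r :: real assume e: "e > 0" and r: "r > 0"
  define B where "B j = {\<omega>\<in>space M. norm (Y \<omega>) > real j}" for j
  obtain j where j: "measure M (B j) < r"
    using LIMSEQ_D[OF tendsto_measure_norm_gt[OF assms(1) Y] r] unfolding B_def by auto
  obtain K where K: "\<And>k. k \<ge> K \<Longrightarrow> \<bar>c k - c0\<bar> < e / (real j + 1)"
    using LIMSEQ_D[OF c, of "e / (real j + 1)"] e by (auto simp: dist_real_def)
  show "\<exists>K. \<forall>k\<ge>K. norm (measure M {\<omega>\<in>space M. dist (c k *\<^sub>R Y \<omega>) (c0 *\<^sub>R Y \<omega>) > e} - 0) < r"
  proof (intro exI allI impI)
    fix k assume "k \<ge> K"
    have "{\<omega>\<in>space M. dist (c k *\<^sub>R Y \<omega>) (c0 *\<^sub>R Y \<omega>) > e} \<subseteq> B j"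
    proof safe
      fix \<omega> assume \<omega>: "\<omega> \<in> space M" and far: "dist (c k *\<^sub>R Y \<omega>) (c0 *\<^sub>R Y \<omega>) > e"
      show "\<omega> \<in> B j"
      proof (rule ccontr)
        assume "\<omega> \<notin> B j"
        then have "norm (Y \<omega>) \<le> real j" using \<omega> unfolding B_def by auto
        then have "\<bar>c k - c0\<bar> * norm (Y \<omega>) \<le> e / (real j + 1) * real j"
          using K[OF \<open>k \<ge> K\<close>] by (intro mult_mono) auto
        also have "\<dots> \<le> e" using e by (simp add: field_simps)
        finally show False
          using far by (simp add: dist_norm scaleR_diff_left[symmetric])
      qed
    qed
    then have "measure M {\<omega>\<in>space M. dist (c k *\<^sub>R Y \<omega>) (c0 *\<^sub>R Y \<omega>) > e} \<le> measure M (B j)"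
      unfolding B_def using Y by (intro finite_measure_mono) measurable
    then show "norm (measure M {\<omega>\<in>space M. dist (c k *\<^sub>R Y \<omega>) (c0 *\<^sub>R Y \<omega>) > e} - 0) < r"
      using j by simp
  qed
qed

lemma converges_in_prob_stoch_continuous:
  assumes "stoch_continuous M X" and "\<And>k. s k \<ge> 0" and "s \<longlonglongrightarrow> s0" and "s0 \<ge> 0"
  shows "converges_in_prob M (\<lambda>k. X (s k)) (X s0)"
  unfolding converges_in_prob_def
proof (intro allI impI)
  fix e :: real assume "e > 0"
  define g where "g s = measure M {\<omega>\<in>space M. dist (X s \<omega>) (X s0 \<omega>) > e}" for s
  have "(g \<longlongrightarrow> g s0) (at s0 within {0..})"
    using assms(1,4) \<open>e > 0\<close> unfolding stoch_continuous_def g_def by auto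
  then have "(g \<circ> s) \<longlonglongrightarrow> g s0"
    using assms(2,3) continuous_within_sequentially[of s0 "{0..}" g]
    unfolding continuous_within by auto
  then show "(\<lambda>k. measure M {\<omega>\<in>space M. dist (X (s k) \<omega>) (X s0 \<omega>) > e}) \<longlonglongrightarrow> 0"
    using \<open>e > 0\<close> unfolding g_def comp_def by simp
qed

lemma ratio_ceiling_tendsto:
  fixes c :: real
  assumes "c > 0"
  shows "(\<lambda>k. real (nat \<lceil>c * real (Suc k)\<rceil>) / real (Suc k)) \<longlonglongrightarrow> c"
proof (rule tendsto_sandwich[of "\<lambda>_. c" _ _ "\<lambda>k. c + inverse (real (Suc k))"])
  have ceiling: "real (nat \<lceil>c * real (Suc k)\<rceil>) = of_int \<lceil>c * real (Suc k)\<rceil>" for k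
    using assms by (simp add: ceiling_le_zero not_le less_imp_le)
  show "\<forall>\<^sub>F k in sequentially. c \<le> real (nat \<lceil>c * real (Suc k)\<rceil>) / real (Suc k)"
    unfolding ceiling by (simp add: field_simps del: of_nat_Suc)
  have "real (nat \<lceil>c * real (Suc k)\<rceil>) / real (Suc k) \<le> (c * real (Suc k) + 1) / real (Suc k)" for k
    unfolding ceiling by (intro divide_right_mono) linarith+
  then show "\<forall>\<^sub>F k in sequentially. real (nat \<lceil>c * real (Suc k)\<rceil>) / real (Suc k) \<le> c + inverse (real (Suc k))"
    by (simp add: field_simps del: of_nat_Suc)
  show "(\<lambda>k. c + inverse (real (Suc k))) \<longlonglongrightarrow> c"
    using tendsto_add[OF tendsto_const LIMSEQ_inverse_real_of_nat, of c] by simp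
qed simp

lemma nat_scaling_of_strictly_stable:
  assumes "IDT \<alpha> M X" and "strictly_stable \<beta> M X" and "n \<ge> 1"
  shows "same_law M (\<lambda>t. X (real n powr (1/\<alpha>) * t)) M (\<lambda>t \<omega>. real n powr (1/\<beta>) *\<^sub>R X t \<omega>)"
proof -
  have "same_law M (\<lambda>t. X (real n powr (1/\<alpha>) * t)) (copies_space M n) (copies_sum X n)"
    using assms(1,3) unfolding IDT_def by simp
  moreover have "same_law (copies_space M n) (copies_sum X n) M (\<lambda>t \<omega>. real n powr (1/\<beta>) *\<^sub>R X t \<omega>)"
    using assms(2,3) unfolding strictly_stable_def by simp
  ultimately show ?thesis
    by (rule same_law_trans)
qed

lemma rational_scaling_of_nat_scaling:
  fixes X :: "real \<Rightarrow> 'a \<Rightarrow> 'b::{real_normed_vector, second_countable_topology}"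
  assumes mX: "\<And>t. t \<ge> 0 \<Longrightarrow> X t \<in> borel_measurable M"
    and nat_scaling: "\<And>n::nat. n \<ge> 1 \<Longrightarrow>
      same_law M (\<lambda>t. X (real n powr (1/\<alpha>) * t)) M (\<lambda>t \<omega>. real n powr (1/\<beta>) *\<^sub>R X t \<omega>)"
    and n: "n \<ge> 1" and m: "m \<ge> 1"
  shows "same_law M (\<lambda>t. X ((real n / real m) powr (1/\<alpha>) * t))
    M (\<lambda>t \<omega>. (real n / real m) powr (1/\<beta>) *\<^sub>R X t \<omega>)"
  \<comment> \<open>Rescale time in the law for \<open>m\<close> by \<open>a\<close>, compare with the law for \<open>n\<close>, divide by \<open>m^(1/\<beta>)\<close>.\<close>
proof -
  define a where "a = (real n / real m) powr (1/\<alpha>)"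
  have mX_scaled: "(\<lambda>\<omega>. r *\<^sub>R X (c * t) \<omega>) \<in> borel_measurable M" if "c \<ge> 0" "t \<ge> 0" for r c t
  proof -
    have "X (c * t) \<in> borel_measurable M"
      using mX that by simp
    then show ?thesis by measurable
  qed
  have "real m powr (1/\<alpha>) * a = (real m * (real n / real m)) powr (1/\<alpha>)"
    unfolding a_def by (rule powr_mult[symmetric])
  also have "real m * (real n / real m) = real n"
    using m by simp
  finally have time: "real m powr (1/\<alpha>) * (a * t) = real n powr (1/\<alpha>) * t" for t
    by (metis mult.assoc)
  have "same_law M (\<lambda>t. X (real m powr (1/\<alpha>) * (a * t))) M (\<lambda>t \<omega>. real m powr (1/\<beta>) *\<^sub>R X (a * t) \<omega>)"
    using mX_scaled[of _ _ 1] mX_scaled[of 1] unfolding a_def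
    by (intro same_law_rescale_time[OF nat_scaling[OF m]]) auto
  then have scaled: "same_law M (\<lambda>t. X (real n powr (1/\<alpha>) * t)) M (\<lambda>t \<omega>. real m powr (1/\<beta>) *\<^sub>R X (a * t) \<omega>)"
    by (simp only: time)
  have "same_law M (\<lambda>t \<omega>. real m powr (1/\<beta>) *\<^sub>R X (a * t) \<omega>) M (\<lambda>t \<omega>. real n powr (1/\<beta>) *\<^sub>R X t \<omega>)"
    by (rule same_law_trans[OF same_law_sym[OF scaled] nat_scaling[OF n]])
  then have "same_law M (\<lambda>t \<omega>. c *\<^sub>R (real m powr (1/\<beta>) *\<^sub>R X (a * t) \<omega>))
      M (\<lambda>t \<omega>. c *\<^sub>R (real n powr (1/\<beta>) *\<^sub>R X t \<omega>))" (is "?law c") for c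
    using mX_scaled[of a] mX_scaled[of 1] unfolding a_def
    by (intro same_law_scaleR) auto
  then have "?law (inverse (real m powr (1/\<beta>)))" .
  moreover have "inverse (real m powr (1/\<beta>)) * real m powr (1/\<beta>) = 1"
    using m by simp
  moreover have "inverse (real m powr (1/\<beta>)) * real n powr (1/\<beta>) = (real n / real m) powr (1/\<beta>)"
    by (subst powr_divide) (auto simp: divide_inverse mult.commute)
  ultimately show ?thesis
    unfolding a_def by (simp only: scaleR_scaleR scaleR_one)
qed

lemma selfsimilar_of_rational_scaling:
  fixes X :: "real \<Rightarrow> 'a \<Rightarrow> 'b::{real_normed_vector, second_countable_topology}"
  assumes "prob_space M" and mX: "\<And>t. t \<ge> 0 \<Longrightarrow> X t \<in> borel_measurable M"
    and cont: "stoch_continuous M X" and "\<alpha> > 0"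
    and rational_scaling: "\<And>n m::nat. n \<ge> 1 \<Longrightarrow> m \<ge> 1 \<Longrightarrow>
      same_law M (\<lambda>t. X ((real n / real m) powr (1/\<alpha>) * t))
        M (\<lambda>t \<omega>. (real n / real m) powr (1/\<beta>) *\<^sub>R X t \<omega>)"
  shows "selfsimilar (\<alpha> / \<beta>) M X"
  unfolding selfsimilar_def same_law_def
proof (intro allI impI)
  fix a :: real and T :: "real set"
  assume "a > 0" and T: "finite T \<and> T \<subseteq> {0..}"
  define q where "q k = real (nat \<lceil>a powr \<alpha> * real (Suc k)\<rceil>) / real (Suc k)" for k
  have "q \<longlonglongrightarrow> a powr \<alpha>"
    unfolding q_def using \<open>a > 0\<close> by (intro ratio_ceiling_tendsto) simp
  then have "(\<lambda>k. q k powr (1/\<alpha>)) \<longlonglongrightarrow> (a powr \<alpha>) powr (1/\<alpha>)"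
    and "(\<lambda>k. q k powr (1/\<beta>)) \<longlonglongrightarrow> (a powr \<alpha>) powr (1/\<beta>)"
    using \<open>a > 0\<close> by (auto intro!: tendsto_powr)
  then have time: "(\<lambda>k. q k powr (1/\<alpha>)) \<longlonglongrightarrow> a"
    and scale: "(\<lambda>k. q k powr (1/\<beta>)) \<longlonglongrightarrow> a powr (\<alpha>/\<beta>)"
    using \<open>\<alpha> > 0\<close> \<open>a > 0\<close> by (simp_all add: powr_powr)
  have "nat \<lceil>a powr \<alpha> * real (Suc k)\<rceil> \<ge> 1" for k
    using \<open>a > 0\<close> by (simp add: Suc_le_eq)
  then have "same_law M (\<lambda>t. X (q k powr (1/\<alpha>) * t)) M (\<lambda>t \<omega>. q k powr (1/\<beta>) *\<^sub>R X t \<omega>)" for k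
    unfolding q_def by (rule rational_scaling) simp
  then have law_q: "fdd M (\<lambda>t. X (q k powr (1/\<alpha>) * t)) T = fdd M (\<lambda>t \<omega>. q k powr (1/\<beta>) *\<^sub>R X t \<omega>) T" for k
    using T unfolding same_law_def by blast
  have "T \<subseteq> {0..}" and "finite T"
    using T by auto
  show "fdd M (\<lambda>t. X (a * t)) T = fdd M (\<lambda>t \<omega>. a powr (\<alpha> / \<beta>) *\<^sub>R X t \<omega>) T"
  proof (rule fdd_eq_of_converges_in_prob[OF assms(1) assms(1) \<open>finite T\<close>, where V="\<lambda>k t. X (q k powr (1/\<alpha>) * t)"
        and W="\<lambda>k t \<omega>. q k powr (1/\<beta>) *\<^sub>R X t \<omega>"])
    fix t assume "t \<in> T"
    with \<open>T \<subseteq> {0..}\<close> \<open>a > 0\<close> show "converges_in_prob M (\<lambda>k. X (q k powr (1/\<alpha>) * t)) (X (a * t))"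
      by (intro converges_in_prob_stoch_continuous[OF cont] tendsto_mult[OF time tendsto_const]) auto
    from \<open>t \<in> T\<close> \<open>T \<subseteq> {0..}\<close> show "converges_in_prob M (\<lambda>k \<omega>. q k powr (1/\<beta>) *\<^sub>R X t \<omega>)
        (\<lambda>\<omega>. a powr (\<alpha> / \<beta>) *\<^sub>R X t \<omega>)"
      by (intro converges_in_prob_scaleR[OF assms(1) _ scale] mX) auto
  qed (use law_q mX \<open>a > 0\<close> \<open>T \<subseteq> {0..}\<close> in \<open>auto simp: subset_eq\<close>)
qed

lemma strictly_stable_of_selfsimilar:
  assumes "IDT \<alpha> M X" and "selfsimilar (\<alpha> / \<beta>) M X" and "\<alpha> > 0"
  shows "strictly_stable \<beta> M X"
  unfolding strictly_stable_def
proof (intro allI impI)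
  fix n :: nat assume "n \<ge> 1"
  then have "same_law M (\<lambda>t. X (real n powr (1/\<alpha>) * t))
      M (\<lambda>t \<omega>. (real n powr (1/\<alpha>)) powr (\<alpha> / \<beta>) *\<^sub>R X t \<omega>)"
    using assms(2) unfolding selfsimilar_def by simp
  moreover have "(real n powr (1/\<alpha>)) powr (\<alpha> / \<beta>) = real n powr (1/\<beta>)"
    using \<open>\<alpha> > 0\<close> by (simp add: powr_powr)
  ultimately have "same_law M (\<lambda>t. X (real n powr (1/\<alpha>) * t)) M (\<lambda>t \<omega>. real n powr (1/\<beta>) *\<^sub>R X t \<omega>)"
    by simp
  moreover have "same_law (copies_space M n) (copies_sum X n) M (\<lambda>t. X (real n powr (1/\<alpha>) * t))"
    using assms(1) \<open>n \<ge> 1\<close> unfolding IDT_def by (simp add: same_law_sym)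
  ultimately show "same_law (copies_space M n) (copies_sum X n) M (\<lambda>t \<omega>. real n powr (1/\<beta>) *\<^sub>R X t \<omega>)"
    by (rule same_law_trans[rotated])
qed

theorem mainTheorem3:
  fixes M :: "'a measure" and X :: "real \<Rightarrow> 'a \<Rightarrow> 'b::euclidean_space"
    and \<alpha> \<beta> :: real
  assumes "\<alpha> > 0" and "\<beta> > 0"
    and "is_process M X"
    and "nontrivial M X"
    and "stoch_continuous M X"
    and "IDT \<alpha> M X"
  shows "strictly_stable \<beta> M X \<longleftrightarrow> selfsimilar (\<alpha> / \<beta>) M X"
proof -
  have "prob_space M" and mX: "\<And>t. t \<ge> 0 \<Longrightarrow> X t \<in> borel_measurable M"
    using \<open>is_process M X\<close> unfolding is_process_def by auto
  show ?thesis
  proof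
    assume "strictly_stable \<beta> M X"
    then have "same_law M (\<lambda>t. X ((real n / real m) powr (1/\<alpha>) * t))
        M (\<lambda>t \<omega>. (real n / real m) powr (1/\<beta>) *\<^sub>R X t \<omega>)" if "n \<ge> 1" "m \<ge> 1" for n m :: nat
      using \<open>IDT \<alpha> M X\<close> mX that
      by (intro rational_scaling_of_nat_scaling nat_scaling_of_strictly_stable)
    then show "selfsimilar (\<alpha> / \<beta>) M X"
      using \<open>prob_space M\<close> mX \<open>stoch_continuous M X\<close> \<open>\<alpha> > 0\<close>
      by (intro selfsimilar_of_rational_scaling)
  next
    assume "selfsimilar (\<alpha> / \<beta>) M X"
    with \<open>IDT \<alpha> M X\<close> \<open>\<alpha> > 0\<close> show "strictly_stable \<beta> M X"
      by (intro strictly_stable_of_selfsimilar)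
  qed
qed

end
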